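(* For every integer $n>1$ and every admissible total-degree monomial ordering on $R_n$, every Gröbner basis of the ideal $(G_n)$ with respect to that ordering has at least $6n+3^n$ elements.
   Context: Let $R_n=\mathbb{F}_2[x_1,\ldots,x_n,y_1,\ldots,y_n,z_1,\ldots,z_n]$ with $\mathbb{F}_2=\mathbb{Z}/(2)$. For $S\subseteq R_n$, $(S)$ denotes the ideal generated by $S$. A total-degree ordering is an admissible monomial ordering that first compares total degrees. Define $S_n=\{c^2-c : c\in\{x_1,\ldots,x_n,y_1,\ldots,y_n,z_1,\ldots,z_n\}\}$, $L_n=\{x_iy_i+x_i+y_i-z_i : i=1,\ldots,n\}$, $T_n=\{x_iz_i-x_i : i=1,\ldots,n\}\cup\{y_iz_i-y_i : i=1,\ldots,n\}$, $P_n=\{\prod_{i=1}^n c_i : c_i\in\{x_i,y_i,z_i\}\text{ for each } i\}$, $G_n=S_n\cup L_n\cup T_n\cup P_n$. *)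

theory Defs
  imports "HOL-Library.Poly_Mapping" "HOL-Library.Z2" "HOL-Library.Cardinality"
begin

text \<open>Variables of R_n: x_i, y_i, z_i for i ranging over the finite index type 'n
  (with CARD('n) = n).\<close>

datatype xyz = VX | VY | VZ

type_synonym 'n mon = "('n \<times> xyz) \<Rightarrow>\<^sub>0 nat"
type_synonym 'n pol = "'n mon \<Rightarrow>\<^sub>0 bit"

definition var :: "'n \<times> xyz \<Rightarrow> 'n pol" where
  "var v = Poly_Mapping.single (Poly_Mapping.single v 1) 1"

abbreviation X :: "'n \<Rightarrow> 'n pol" where "X i \<equiv> var (i, VX)"
abbreviation Y :: "'n \<Rightarrow> 'n pol" where "Y i \<equiv> var (i, VY)"
abbreviation Z :: "'n \<Rightarrow> 'n pol" where "Z i \<equiv> var (i, VZ)"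

definition S_set :: "'n pol set" where
  "S_set = {var v ^ 2 - var v | v. True}"

definition L_set :: "'n pol set" where
  "L_set = {X i * Y i + X i + Y i - Z i | i. True}"

definition T_set :: "'n pol set" where
  "T_set = {X i * Z i - X i | i. True} \<union> {Y i * Z i - Y i | i. True}"

definition P_set :: "'n::finite pol set" where
  "P_set = {(\<Prod>i\<in>UNIV. var (i, c i)) | c. True}"

definition G_set :: "'n::finite pol set" where
  "G_set = S_set \<union> L_set \<union> T_set \<union> P_set"

definition ideal_gen :: "'n pol set \<Rightarrow> 'n pol set" where
  "ideal_gen S = {(\<Sum>s\<in>F. h s * s) | F h. finite F \<and> F \<subseteq> S}"

definition tdeg :: "'n mon \<Rightarrow> nat" where
  "tdeg m = (\<Sum>v\<in>Poly_Mapping.keys m. Poly_Mapping.lookup m v)"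

definition admissible_order :: "('n mon \<Rightarrow> 'n mon \<Rightarrow> bool) \<Rightarrow> bool" where
  "admissible_order le \<longleftrightarrow>
     (\<forall>a. le a a) \<and>
     (\<forall>a b c. le a b \<longrightarrow> le b c \<longrightarrow> le a c) \<and>
     (\<forall>a b. le a b \<longrightarrow> le b a \<longrightarrow> a = b) \<and>
     (\<forall>a b. le a b \<or> le b a) \<and>
     (\<forall>a. le 0 a) \<and>
     (\<forall>a b c. le a b \<longrightarrow> le (a + c) (b + c)) \<and>
     wfP (\<lambda>a b. le a b \<and> a \<noteq> b)"

definition total_degree_order :: "('n mon \<Rightarrow> 'n mon \<Rightarrow> bool) \<Rightarrow> bool" where
  "total_degree_order le \<longleftrightarrow> admissible_order le \<and>
     (\<forall>a b. tdeg a < tdeg b \<longrightarrow> le a b \<and> a \<noteq> b)"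

definition lm :: "('n mon \<Rightarrow> 'n mon \<Rightarrow> bool) \<Rightarrow> 'n pol \<Rightarrow> 'n mon" where
  "lm le p = (THE m. m \<in> Poly_Mapping.keys p \<and> (\<forall>m'\<in>Poly_Mapping.keys p. le m' m))"

definition mdvd :: "'n mon \<Rightarrow> 'n mon \<Rightarrow> bool" where
  "mdvd a b \<longleftrightarrow> (\<forall>v. Poly_Mapping.lookup a v \<le> Poly_Mapping.lookup b v)"

definition is_groebner_basis ::
  "('n mon \<Rightarrow> 'n mon \<Rightarrow> bool) \<Rightarrow> 'n pol set \<Rightarrow> 'n pol set \<Rightarrow> bool" where
  "is_groebner_basis le I G \<longleftrightarrow> finite G \<and> G \<subseteq> I \<and>
     (\<forall>f\<in>I. f \<noteq> 0 \<longrightarrow> (\<exists>g\<in>G. g \<noteq> 0 \<and> mdvd (lm le g) (lm le f)))"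

end

theory Submission
  imports Defs "HOL-Library.FuncSet"
begin

text \<open>Each monomial of G_leads (the 6n squares and products of two variables of one block
  {x_i, y_i, z_i}, and the 3^n products choosing one variable per block) is the leading monomial
  of a generator, so some basis element has a leading monomial dividing it. For n > 1 every proper
  divisor d of such a monomial is sparse: degree at most one in each block and zero in some block.
  But no nonzero ideal element has a sparse leading monomial under a degree ordering. The points
  with z_i = x_i + y_i + x_i y_i and one block zero are zeros of G_n, and summing evaluations over a
  box of such points chosen blockwise from d extracts the coefficient of d among all monomials of
  degree at most deg d. So all 6n + 3^n monomials of G_leads are leading monomials of the basis.\<close>

(* keep F_2 arithmetic in ring form instead of the default xor/and normal form *)
declare power_bit_unfold [simp del] add_bit_eq_xor [simp del] mult_bit_eq_and [simp del]

lemma UNIV_xyz: "(UNIV :: xyz set) = {VX, VY, VZ}"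
  using xyz.exhaust by auto

instance xyz :: finite
  by standard (simp add: UNIV_xyz)

definition eval_mon :: "('v::finite \<Rightarrow> 'a::comm_semiring_1) \<Rightarrow> ('v \<Rightarrow>\<^sub>0 nat) \<Rightarrow> 'a" where
  "eval_mon p u = (\<Prod>v\<in>UNIV. p v ^ Poly_Mapping.lookup u v)"

definition eval_pol :: "('v::finite \<Rightarrow> 'a::comm_semiring_1) \<Rightarrow> (('v \<Rightarrow>\<^sub>0 nat) \<Rightarrow>\<^sub>0 'a) \<Rightarrow> 'a" where
  "eval_pol p f = (\<Sum>u\<in>Poly_Mapping.keys f. Poly_Mapping.lookup f u * eval_mon p u)"

lemma eval_mon_zero [simp]: "eval_mon p 0 = 1"
  by (simp add: eval_mon_def)

lemma eval_mon_add: "eval_mon p (a + b) = eval_mon p a * eval_mon p b"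
  by (simp add: eval_mon_def lookup_add power_add prod.distrib)

lemma eval_mon_single [simp]: "eval_mon p (Poly_Mapping.single v 1) = p v"
  by (simp add: eval_mon_def lookup_single when_def power_0 if_distrib prod.delta' cong: if_cong)

lemma eval_pol_superset:
  assumes "finite K" "Poly_Mapping.keys f \<subseteq> K"
  shows "eval_pol p f = (\<Sum>u\<in>K. Poly_Mapping.lookup f u * eval_mon p u)"
  unfolding eval_pol_def
  by (rule sum.mono_neutral_left) (use assms in \<open>auto simp: in_keys_iff\<close>)

lemma eval_pol_zero [simp]: "eval_pol p 0 = 0"
  by (simp add: eval_pol_def)

lemma eval_pol_single [simp]: "eval_pol p (Poly_Mapping.single u c) = c * eval_mon p u"
  by (simp add: eval_pol_def)

lemma eval_pol_add: "eval_pol p (f + g) = eval_pol p f + eval_pol p g"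
proof -
  let ?K = "Poly_Mapping.keys f \<union> Poly_Mapping.keys g"
  have "eval_pol p (f + g) = (\<Sum>u\<in>?K. Poly_Mapping.lookup (f + g) u * eval_mon p u)"
    using keys_add[of f g] by (intro eval_pol_superset) auto
  also have "\<dots> = eval_pol p f + eval_pol p g"
    by (simp add: lookup_add distrib_right sum.distrib eval_pol_superset[of ?K])
  finally show ?thesis .
qed

lemma eval_pol_sum: "eval_pol p (sum h A) = (\<Sum>a\<in>A. eval_pol p (h a))"
  by (induction A rule: infinite_finite_induct) (auto simp: eval_pol_add)

lemma eval_pol_uminus:
  fixes p :: "'v::finite \<Rightarrow> 'a::comm_ring_1"
  shows "eval_pol p (- f) = - eval_pol p f"
  by (simp add: eval_pol_def sum_negf)

lemma eval_pol_diff: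
  fixes p :: "'v::finite \<Rightarrow> 'a::comm_ring_1"
  shows "eval_pol p (f - g) = eval_pol p f - eval_pol p g"
  using eval_pol_add[of p f "- g"] by (simp add: eval_pol_uminus)

lemma eval_pol_mult: "eval_pol p (f * g) = eval_pol p f * eval_pol p g"
proof -
  have expand: "h = (\<Sum>u\<in>Poly_Mapping.keys h. Poly_Mapping.single u (Poly_Mapping.lookup h u))" for h
    by (rule poly_mapping_eqI)
      (simp add: lookup_sum lookup_single when_def in_keys_iff sum.delta' cong: if_cong)
  have "eval_pol p (f * g) = (\<Sum>a\<in>Poly_Mapping.keys f. \<Sum>b\<in>Poly_Mapping.keys g.
      (Poly_Mapping.lookup f a * eval_mon p a) * (Poly_Mapping.lookup g b * eval_mon p b))"
    by (subst expand[of f], subst expand[of g])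
      (simp add: sum_product eval_pol_sum mult_single eval_mon_add mult_ac)
  also have "\<dots> = eval_pol p f * eval_pol p g"
    by (simp add: eval_pol_def sum_product)
  finally show ?thesis .
qed

lemma eval_pol_one [simp]: "eval_pol p 1 = 1"
  using eval_pol_single[of p 0 1] by (simp del: eval_pol_single)

lemma eval_pol_prod: "eval_pol p (prod h A) = (\<Prod>a\<in>A. eval_pol p (h a))"
  by (induction A rule: infinite_finite_induct) (auto simp: eval_pol_mult)

lemma eval_pol_power: "eval_pol p (f ^ k) = eval_pol p f ^ k"
  by (induction k) (auto simp: eval_pol_mult)

lemma eval_pol_var [simp]: "eval_pol p (var v) = p v"
  unfolding var_def by (simp only: eval_pol_single eval_mon_single mult_1)

lemma tdeg_UNIV: "tdeg (m :: 'n::finite mon) = (\<Sum>v\<in>UNIV. Poly_Mapping.lookup m v)"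
  unfolding tdeg_def by (rule sum.mono_neutral_left) (auto simp: in_keys_iff)

lemma tdeg_add: "tdeg (a + b :: 'n::finite mon) = tdeg a + tdeg b"
  by (simp add: tdeg_UNIV lookup_add sum.distrib)

lemma tdeg_single [simp]: "tdeg (Poly_Mapping.single v k) = k"
  by (simp add: tdeg_def)

lemma admissible_order_ex_greatest:
  assumes adm: "admissible_order le" and "finite A" "A \<noteq> {}"
  shows "\<exists>m\<in>A. \<forall>m'\<in>A. le m' m"
  using assms(2,3)
proof (induction A rule: finite_ne_induct)
  case (singleton x)
  then show ?case using adm by (simp add: admissible_order_def)
next
  case (insert x F)
  then obtain m where "m \<in> F" "\<forall>m'\<in>F. le m' m" by blast
  with adm show ?case unfolding admissible_order_def by (metis insert_iff)
qed

lemma lm_eqI: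
  assumes adm: "admissible_order le"
    and "m \<in> Poly_Mapping.keys p" "\<forall>m'\<in>Poly_Mapping.keys p. le m' m"
  shows "lm le p = m"
  unfolding lm_def
  by (rule the_equality) (use assms in \<open>auto simp: admissible_order_def\<close>)

lemma lm_greatest:
  assumes adm: "admissible_order le" and "p \<noteq> 0"
  shows "lm le p \<in> Poly_Mapping.keys p" "\<forall>m'\<in>Poly_Mapping.keys p. le m' (lm le p)"
proof -
  obtain m where "m \<in> Poly_Mapping.keys p" "\<forall>m'\<in>Poly_Mapping.keys p. le m' m"
    using admissible_order_ex_greatest[OF adm finite_keys] \<open>p \<noteq> 0\<close> by auto
  with lm_eqI[OF adm] show "lm le p \<in> Poly_Mapping.keys p"
    "\<forall>m'\<in>Poly_Mapping.keys p. le m' (lm le p)"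
    by auto
qed

lemma tdeg_le_lm:
  assumes tdo: "total_degree_order le" and "p \<noteq> 0" and "u \<in> Poly_Mapping.keys p"
  shows "tdeg u \<le> tdeg (lm le p)"
proof (rule ccontr)
  have adm: "admissible_order le" using tdo by (simp add: total_degree_order_def)
  assume "\<not> tdeg u \<le> tdeg (lm le p)"
  then have "le (lm le p) u" "lm le p \<noteq> u" using tdo by (auto simp: total_degree_order_def)
  moreover have "le u (lm le p)" using lm_greatest[OF adm \<open>p \<noteq> 0\<close>] \<open>u \<in> _\<close> by blast
  ultimately show False using adm by (auto simp: admissible_order_def)
qed

lemma lm_single_plus_lower:
  assumes tdo: "total_degree_order le" and "c \<noteq> 0"
    and lower: "\<forall>u\<in>Poly_Mapping.keys h. tdeg u < tdeg m"
  shows "Poly_Mapping.single m c + h \<noteq> 0" "lm le (Poly_Mapping.single m c + h) = m"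
proof -
  have adm: "admissible_order le" using tdo by (simp add: total_degree_order_def)
  have "m \<notin> Poly_Mapping.keys h" using lower by blast
  then have m_in: "m \<in> Poly_Mapping.keys (Poly_Mapping.single m c + h)"
    using \<open>c \<noteq> 0\<close> by (simp add: in_keys_iff lookup_add)
  then show "Poly_Mapping.single m c + h \<noteq> 0" by auto
  have "le u m" if "u \<in> Poly_Mapping.keys (Poly_Mapping.single m c + h)" for u
  proof (cases "u = m")
    case True
    then show ?thesis using adm by (simp add: admissible_order_def)
  next
    case False
    then have "u \<in> Poly_Mapping.keys h"
      using that keys_add[of "Poly_Mapping.single m c" h] by (auto split: if_splits)
    then show ?thesis using tdo lower by (auto simp: total_degree_order_def)
  qed
  then show "lm le (Poly_Mapping.single m c + h) = m" using lm_eqI[OF adm m_in] by blast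
qed

definition block_deg :: "'n mon \<Rightarrow> 'n \<Rightarrow> nat" where
  "block_deg d i =
     Poly_Mapping.lookup d (i, VX) + Poly_Mapping.lookup d (i, VY) + Poly_Mapping.lookup d (i, VZ)"

definition sparse_mon :: "'n mon \<Rightarrow> bool" where
  "sparse_mon d \<longleftrightarrow> (\<forall>i. block_deg d i \<le> 1) \<and> (\<exists>j. block_deg d j = 0)"

lemma sum_UNIV_xyz: "(\<Sum>t\<in>UNIV. f t) = f VX + f VY + (f VZ :: 'a::comm_monoid_add)"
  by (simp add: UNIV_xyz add.assoc)

lemma prod_UNIV_xyz: "(\<Prod>t\<in>UNIV. f t) = f VX * f VY * (f VZ :: 'a::comm_monoid_mult)"
  by (simp add: UNIV_xyz mult.assoc)

lemma tdeg_eq_sum_block_deg: "tdeg (m :: 'n::finite mon) = (\<Sum>i\<in>UNIV. block_deg m i)"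
proof -
  have "tdeg m = (\<Sum>v\<in>UNIV \<times> UNIV. Poly_Mapping.lookup m v)"
    by (simp add: tdeg_UNIV UNIV_Times_UNIV)
  also have "\<dots> = (\<Sum>i\<in>UNIV. \<Sum>t\<in>UNIV. Poly_Mapping.lookup m (i, t))"
    by (simp add: sum.cartesian_product)
  also have "\<dots> = (\<Sum>i\<in>UNIV. block_deg m i)"
    by (simp add: sum_UNIV_xyz block_deg_def)
  finally show ?thesis .
qed

definition bit_or :: "bit \<Rightarrow> bit \<Rightarrow> bit" where
  "bit_or a b = a + b + a * b"

fun block_point :: "('n \<Rightarrow> bit \<times> bit) \<Rightarrow> 'n \<times> xyz \<Rightarrow> bit" where
  "block_point q (i, VX) = fst (q i)"
| "block_point q (i, VY) = snd (q i)"
| "block_point q (i, VZ) = bit_or (fst (q i)) (snd (q i))"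

definition eval_block :: "bit \<times> bit \<Rightarrow> 'n mon \<Rightarrow> 'n \<Rightarrow> bit" where
  "eval_block r u i = fst r ^ Poly_Mapping.lookup u (i, VX) * snd r ^ Poly_Mapping.lookup u (i, VY)
     * bit_or (fst r) (snd r) ^ Poly_Mapping.lookup u (i, VZ)"

lemma eval_mon_block_point:
  "eval_mon (block_point q) (u :: 'n::finite mon) = (\<Prod>i\<in>UNIV. eval_block (q i) u i)"
proof -
  have "eval_mon (block_point q) u = (\<Prod>v\<in>UNIV \<times> UNIV. block_point q v ^ Poly_Mapping.lookup u v)"
    by (simp add: eval_mon_def UNIV_Times_UNIV)
  also have "\<dots> = (\<Prod>i\<in>UNIV. \<Prod>t\<in>UNIV. block_point q (i, t) ^ Poly_Mapping.lookup u (i, t))"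
    by (simp add: prod.cartesian_product)
  also have "\<dots> = (\<Prod>i\<in>UNIV. eval_block (q i) u i)"
    by (simp add: prod_UNIV_xyz eval_block_def)
  finally show ?thesis .
qed

lemma eval_G_set_block_point:
  assumes "q j = (0, 0)" and "s \<in> G_set"
  shows "eval_pol (block_point q) s = 0"
  using \<open>s \<in> G_set\<close> unfolding G_set_def
proof (elim UnE)
  assume "s \<in> S_set"
  then obtain v where s: "s = var v ^ 2 - var v" unfolding S_set_def by blast
  show ?thesis unfolding s by (cases "block_point q v") (auto simp: eval_pol_diff eval_pol_power)
next
  assume "s \<in> L_set"
  then obtain i where s: "s = X i * Y i + X i + Y i - Z i" unfolding L_set_def by blast
  show ?thesis unfolding s
    by (simp add: eval_pol_diff eval_pol_add eval_pol_mult bit_or_def algebra_simps)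
next
  assume "s \<in> T_set"
  then obtain i where "s = X i * Z i - X i \<or> s = Y i * Z i - Y i" unfolding T_set_def by blast
  then show ?thesis
    by (cases "fst (q i)"; cases "snd (q i)") (auto simp: eval_pol_diff eval_pol_mult bit_or_def)
next
  assume "s \<in> P_set"
  then obtain c where s: "s = (\<Prod>i\<in>UNIV. var (i, c i))" unfolding P_set_def by blast
  have "block_point q (j, c j) = 0" using \<open>q j = (0, 0)\<close> by (cases "c j") (auto simp: bit_or_def)
  then show ?thesis unfolding s eval_pol_prod eval_pol_var by (intro prod_zero) auto
qed

lemma in_ideal_gen: "s \<in> S \<Longrightarrow> s \<in> ideal_gen S"
  unfolding ideal_gen_def by (intro CollectI exI[of _ "{s}"] exI[of _ "\<lambda>_. 1"]) auto

lemma eval_ideal_block_point: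
  assumes "q j = (0, 0)" and "f \<in> ideal_gen G_set"
  shows "eval_pol (block_point q) f = 0"
proof -
  from \<open>f \<in> ideal_gen G_set\<close> obtain F h where "f = (\<Sum>s\<in>F. h s * s)" "F \<subseteq> G_set"
    unfolding ideal_gen_def by blast
  then show ?thesis
    using eval_G_set_block_point[of q j] \<open>q j = (0, 0)\<close>
      by (auto simp: eval_pol_sum eval_pol_mult intro!: sum.neutral)
qed

text \<open>Summed over these choices, eval_block r u i is, for u of block degree at most one,
  the indicator of u agreeing with d on block i.\<close>
definition block_choices :: "'n mon \<Rightarrow> 'n \<Rightarrow> (bit \<times> bit) set" where
  "block_choices d i =
     (if block_deg d i = 0 then {(0, 0)}
      else if Poly_Mapping.lookup d (i, VX) \<noteq> 0 then {(0, 1), (1, 1)}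
      else if Poly_Mapping.lookup d (i, VY) \<noteq> 0 then {(1, 0), (1, 1)}
      else UNIV)"

definition block_sum :: "'n mon \<Rightarrow> 'n mon \<Rightarrow> 'n \<Rightarrow> bit" where
  "block_sum d u i = (\<Sum>r\<in>block_choices d i. eval_block r u i)"

lemma UNIV_bit_pair: "(UNIV :: (bit \<times> bit) set) = {(0, 0), (0, 1), (1, 0), (1, 1)}"
  by (auto intro: bit.exhaust)

lemma all_xyz: "(\<forall>t. P t) \<longleftrightarrow> P VX \<and> P VY \<and> P VZ"
  by (metis xyz.exhaust)

lemma block_deg_eq_1_cases:
  assumes "block_deg d i = 1"
  obtains "Poly_Mapping.lookup d (i, VX) = 1" "Poly_Mapping.lookup d (i, VY) = 0"
      "Poly_Mapping.lookup d (i, VZ) = 0"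
    | "Poly_Mapping.lookup d (i, VX) = 0" "Poly_Mapping.lookup d (i, VY) = 1"
      "Poly_Mapping.lookup d (i, VZ) = 0"
    | "Poly_Mapping.lookup d (i, VX) = 0" "Poly_Mapping.lookup d (i, VY) = 0"
      "Poly_Mapping.lookup d (i, VZ) = 1"
  using assms unfolding block_deg_def by arith

lemma block_sum_of_empty_block:
  "block_deg d i = 0 \<Longrightarrow> block_sum d u i = (if block_deg u i = 0 then 1 else 0)"
  by (auto simp: block_sum_def block_choices_def eval_block_def bit_or_def block_deg_def
      power_0_left)

lemma block_sum_at_empty_block:
  assumes "block_deg d i = 1" "block_deg u i = 0"
  shows "block_sum d u i = 0"
  using assms(1) by (rule block_deg_eq_1_cases)
    (use assms(2) in \<open>auto simp: block_sum_def block_choices_def eval_block_def bit_or_def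
      block_deg_def UNIV_bit_pair\<close>)

lemma block_sum_of_linear_block:
  assumes "block_deg d i = 1" "block_deg u i = 1"
  shows "block_sum d u i =
    (if \<forall>t. Poly_Mapping.lookup u (i, t) = Poly_Mapping.lookup d (i, t) then 1 else 0)"
  by (rule block_deg_eq_1_cases[OF assms(1)]; rule block_deg_eq_1_cases[OF assms(2)])
    (auto simp: all_xyz block_sum_def block_choices_def eval_block_def bit_or_def block_deg_def
      UNIV_bit_pair)

lemma block_sum_diagonal:
  assumes "sparse_mon d"
  shows "block_sum d d i = 1"
proof -
  have "block_deg d i = 0 \<or> block_deg d i = 1" using assms by (auto simp: sparse_mon_def le_Suc_eq)
  then show ?thesis
    using block_sum_of_empty_block[of d i d] block_sum_of_linear_block[of d i d] by auto
qed

lemma eq_if_block_sums_nonzero: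
  fixes d u :: "'n::finite mon"
  assumes "sparse_mon d" and "tdeg u \<le> tdeg d" and nonzero: "\<And>i. block_sum d u i \<noteq> 0"
  shows "u = d"
proof -
  have d01: "block_deg d i = 0 \<or> block_deg d i = 1" for i
    using \<open>sparse_mon d\<close> by (auto simp: sparse_mon_def le_Suc_eq)
  have le: "block_deg d i \<le> block_deg u i" for i
    using d01[of i] block_sum_at_empty_block[of d i u] nonzero[of i] by fastforce
  have same_deg: "block_deg u i = block_deg d i" for i
  proof (rule ccontr)
    assume "block_deg u i \<noteq> block_deg d i"
    with le[of i] have "block_deg d i < block_deg u i" by simp
    with le have "(\<Sum>i\<in>UNIV. block_deg d i) < (\<Sum>i\<in>UNIV. block_deg u i)"
      by (intro sum_strict_mono_ex1) auto
    with \<open>tdeg u \<le> tdeg d\<close> show False by (simp add: tdeg_eq_sum_block_deg)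
  qed
  have "Poly_Mapping.lookup u (i, t) = Poly_Mapping.lookup d (i, t)" for i t
  proof (cases "block_deg d i = 0")
    case True
    with same_deg[of i] show ?thesis by (cases t) (auto simp: block_deg_def)
  next
    case False
    with d01[of i] same_deg[of i] nonzero[of i] show ?thesis
      by (auto simp: block_sum_of_linear_block split: if_splits)
  qed
  then show "u = d" by (intro poly_mapping_eqI) auto
qed

lemma sum_box_eval_mon:
  fixes d u :: "'n::finite mon"
  assumes "sparse_mon d" and "tdeg u \<le> tdeg d"
  shows "(\<Sum>q\<in>PiE UNIV (block_choices d). eval_mon (block_point q) u) = (if u = d then 1 else 0)"
proof -
  have "(\<Sum>q\<in>PiE UNIV (block_choices d). eval_mon (block_point q) u)
      = (\<Sum>q\<in>PiE UNIV (block_choices d). \<Prod>i\<in>UNIV. eval_block (q i) u i)"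
    by (simp add: eval_mon_block_point)
  also have "\<dots> = (\<Prod>i\<in>UNIV. block_sum d u i)"
    unfolding block_sum_def by (rule prod_sum_PiE[symmetric])
      (auto simp: block_choices_def UNIV_bit_pair)
  also have "\<dots> = (if u = d then 1 else 0)"
  proof (cases "u = d")
    case True
    then show ?thesis using block_sum_diagonal[OF \<open>sparse_mon d\<close>] by simp
  next
    case False
    then obtain i where "block_sum d u i = 0" using eq_if_block_sums_nonzero[OF assms] by blast
    with False show ?thesis by (metis (mono_tags) UNIV_I finite prod_zero)
  qed
  finally show ?thesis .
qed

lemma not_sparse_lm_ideal:
  fixes g :: "'n::finite pol"
  assumes tdo: "total_degree_order le" and "g \<in> ideal_gen G_set" and "g \<noteq> 0"
  shows "\<not> sparse_mon (lm le g)"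
proof
  let ?d = "lm le g"
  assume sparse: "sparse_mon ?d"
  have d_in: "?d \<in> Poly_Mapping.keys g"
    using lm_greatest tdo \<open>g \<noteq> 0\<close> by (auto simp: total_degree_order_def)
  obtain j where "block_deg ?d j = 0" using sparse by (auto simp: sparse_mon_def)
  then have "q j = (0, 0)" if "q \<in> PiE UNIV (block_choices ?d)" for q
    using PiE_mem[OF that, of j] by (simp add: block_choices_def)
  then have "0 = (\<Sum>q\<in>PiE UNIV (block_choices ?d). eval_pol (block_point q) g)"
    using eval_ideal_block_point \<open>g \<in> ideal_gen G_set\<close> by (metis (no_types, lifting) sum.neutral)
  also have "\<dots> = (\<Sum>u\<in>Poly_Mapping.keys g.
      Poly_Mapping.lookup g u * (\<Sum>q\<in>PiE UNIV (block_choices ?d). eval_mon (block_point q) u))"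
    unfolding eval_pol_def by (subst sum.swap) (simp add: sum_distrib_left)
  also have "\<dots> = Poly_Mapping.lookup g ?d"
    using d_in tdeg_le_lm[OF tdo \<open>g \<noteq> 0\<close>]
      by (simp add: sum_box_eval_mon[OF sparse] if_distrib cong: if_cong)
  finally show False using d_in by (simp add: in_keys_iff)
qed

definition vmon :: "'n \<times> xyz \<Rightarrow> 'n mon" where
  "vmon v = Poly_Mapping.single v 1"

definition square_mon :: "'n \<times> xyz \<Rightarrow> 'n mon" where
  "square_mon v = vmon v + vmon v"

fun cross_mon :: "'n \<times> xyz \<Rightarrow> 'n mon" where
  "cross_mon (i, VX) = vmon (i, VY) + vmon (i, VZ)"
| "cross_mon (i, VY) = vmon (i, VX) + vmon (i, VZ)"
| "cross_mon (i, VZ) = vmon (i, VX) + vmon (i, VY)"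

definition select_mon :: "('n::finite \<Rightarrow> xyz) \<Rightarrow> 'n mon" where
  "select_mon c = (\<Sum>i\<in>UNIV. vmon (i, c i))"

definition G_leads :: "'n::finite mon set" where
  "G_leads = range square_mon \<union> range cross_mon \<union> range select_mon"

lemma lookup_vmon: "Poly_Mapping.lookup (vmon v) w = (if w = v then 1 else 0)"
  by (simp add: vmon_def lookup_single when_def)

lemma lookup_square_mon: "Poly_Mapping.lookup (square_mon v) w = (if w = v then 2 else 0)"
  by (simp add: square_mon_def lookup_add lookup_vmon)

lemma lookup_cross_mon:
  "Poly_Mapping.lookup (cross_mon (i, t)) (j, s) = (if j = i \<and> s \<noteq> t then 1 else 0)"
  by (cases t; cases s) (auto simp: lookup_add lookup_vmon)

lemma lookup_select_mon: "Poly_Mapping.lookup (select_mon c) (j, s) = (if s = c j then 1 else 0)"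
proof -
  have "Poly_Mapping.lookup (select_mon c) (j, s)
      = (\<Sum>i\<in>UNIV. if j = i then (if s = c i then 1 else 0) else 0)"
    unfolding select_mon_def lookup_sum by (intro sum.cong) (auto simp: lookup_vmon)
  then show ?thesis by simp
qed

lemma block_deg_square_mon: "block_deg (square_mon (i, t)) j = (if j = i then 2 else 0)"
  by (cases t) (auto simp: block_deg_def lookup_square_mon)

lemma block_deg_cross_mon: "block_deg (cross_mon (i, t)) j = (if j = i then 2 else 0)"
  by (cases t) (auto simp: block_deg_def lookup_cross_mon simp del: cross_mon.simps)

lemma block_deg_select_mon: "block_deg (select_mon c) j = 1"
  by (cases "c j") (auto simp: block_deg_def lookup_select_mon)

lemma block_deg_mono: "mdvd d m \<Longrightarrow> block_deg d i \<le> block_deg m i"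
  unfolding mdvd_def block_deg_def by (intro add_mono) auto

lemma proper_divisor_block_deg_less:
  assumes "mdvd d m" and "d \<noteq> m"
  obtains i where "block_deg d i < block_deg m i"
proof -
  obtain i t where "Poly_Mapping.lookup d (i, t) \<noteq> Poly_Mapping.lookup m (i, t)"
    using \<open>d \<noteq> m\<close> poly_mapping_eqI by (metis surj_pair)
  with \<open>mdvd d m\<close> have "Poly_Mapping.lookup d (i, t) < Poly_Mapping.lookup m (i, t)"
    by (metis mdvd_def le_neq_implies_less)
  with \<open>mdvd d m\<close> have "block_deg d i < block_deg m i"
    unfolding mdvd_def block_deg_def
    by (cases t) (auto intro: add_less_le_mono add_le_less_mono add_mono)
  then show thesis by (rule that)
qed

lemma ex_other_index:
  fixes i :: "'n::finite"
  assumes "CARD('n) > 1"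
  obtains j where "j \<noteq> i"
proof -
  have "UNIV \<noteq> {i}" using assms
    by (metis card.empty card_insert_disjoint empty_iff finite.emptyI less_irrefl One_nat_def)
  then show thesis using that by blast
qed

text \<open>Here n > 1 is needed: for n = 1 the monomial x_1 divides x_1 y_1 but is not sparse.\<close>
lemma proper_divisor_G_leads_sparse:
  fixes m d :: "'n::finite mon"
  assumes n: "CARD('n) > 1" and "m \<in> G_leads" and "mdvd d m" and "d \<noteq> m"
  shows "sparse_mon d"
proof -
  obtain i0 where less: "block_deg d i0 < block_deg m i0"
    using proper_divisor_block_deg_less[OF \<open>mdvd d m\<close> \<open>d \<noteq> m\<close>] .
  have le: "block_deg d j \<le> block_deg m j" for j
    using block_deg_mono[OF \<open>mdvd d m\<close>] .
  show ?thesis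
  proof (cases "m \<in> range select_mon")
    case True
    then have "block_deg m j = 1" for j by (auto simp: block_deg_select_mon)
    with less le show ?thesis unfolding sparse_mon_def by (metis less_one)
  next
    case False
    then obtain i t where "m = square_mon (i, t) \<or> m = cross_mon (i, t)"
      using \<open>m \<in> G_leads\<close> unfolding G_leads_def by auto
    then have deg_m: "block_deg m j = (if j = i then 2 else 0)" for j
      using block_deg_square_mon block_deg_cross_mon by metis
    have "i0 = i" using less deg_m[of i0] by (auto split: if_splits)
    have deg_d: "block_deg d k \<le> 1" for k
      using less le[of k] deg_m[of k] \<open>i0 = i\<close> by (cases "k = i") auto
    obtain j where "j \<noteq> i" using ex_other_index[OF n] .
    then have "block_deg d j = 0" using le[of j] deg_m[of j] by simp
    with deg_d show ?thesis unfolding sparse_mon_def by blast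
  qed
qed

lemma var_eq_single_vmon: "var v = Poly_Mapping.single (vmon v) 1"
  by (simp add: var_def vmon_def)

lemma tdeg_vmon [simp]: "tdeg (vmon v) = 1"
  by (simp add: vmon_def)

lemma lm_quadratic_plus_linear:
  fixes h :: "'n::finite pol"
  assumes tdo: "total_degree_order le" and linear: "Poly_Mapping.keys h \<subseteq> range vmon"
  shows "var a * var b + h \<noteq> 0" "lm le (var a * var b + h) = vmon a + vmon b"
proof -
  have "var a * var b = Poly_Mapping.single (vmon a + vmon b) 1"
    by (simp add: var_eq_single_vmon mult_single)
  moreover have "\<forall>u\<in>Poly_Mapping.keys h. tdeg u < tdeg (vmon a + vmon b)"
    using linear by (auto simp: tdeg_add)
  ultimately show "var a * var b + h \<noteq> 0" "lm le (var a * var b + h) = vmon a + vmon b"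
    using lm_single_plus_lower[OF tdo] by auto
qed

lemma keys_var: "Poly_Mapping.keys (var v) = {vmon v}"
  by (simp add: var_eq_single_vmon)

lemma G_leads_are_lm_G_set:
  fixes m :: "'n::finite mon"
  assumes tdo: "total_degree_order le" and "m \<in> G_leads"
  shows "\<exists>f\<in>G_set. f \<noteq> 0 \<and> lm le f = m"
proof -
  have quadratic: "\<exists>f\<in>G_set. f \<noteq> 0 \<and> lm le f = m"
    if "var a * var b + h \<in> G_set" "Poly_Mapping.keys h \<subseteq> range vmon" "m = vmon a + vmon b"
    for a b h
    using that lm_quadratic_plus_linear[OF tdo] by metis
  consider (square) v where "m = square_mon v" | (cross) i t where "m = cross_mon (i, t)"
    | (select) c where "m = select_mon c"
    using \<open>m \<in> G_leads\<close> unfolding G_leads_def by auto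
  then show ?thesis
  proof cases
    case (square v)
    have "var v ^ 2 - var v \<in> G_set" unfolding G_set_def S_set_def by blast
    then have "var v * var v + - var v \<in> G_set" by (simp add: power2_eq_square)
    then show ?thesis using square quadratic[of v v "- var v"]
      by (simp add: keys_var square_mon_def)
  next
    case (cross i t)
    show ?thesis
    proof (cases t)
      case VX
      have "Y i * Z i + - Y i \<in> G_set" unfolding G_set_def T_set_def by auto
      then show ?thesis using cross VX quadratic[of "(i, VY)" "(i, VZ)" "- Y i"]
        by (simp add: keys_var)
    next
      case VY
      have "X i * Z i + - X i \<in> G_set" unfolding G_set_def T_set_def by auto
      then show ?thesis using cross VY quadratic[of "(i, VX)" "(i, VZ)" "- X i"]
        by (simp add: keys_var)
    next
      case VZ
      have "X i * Y i + X i + Y i - Z i \<in> G_set" unfolding G_set_def L_set_def by blast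
      then have "X i * Y i + (X i + Y i - Z i) \<in> G_set" by (simp add: add_diff_eq add.assoc)
      moreover have "Poly_Mapping.keys (X i + Y i - Z i) \<subseteq> range vmon"
        using keys_add keys_diff by (fastforce simp: keys_var)
      ultimately show ?thesis using cross VZ quadratic by simp
    qed
  next
    case (select c)
    have "(\<Prod>i\<in>UNIV. var (i, c i)) = Poly_Mapping.single (select_mon c) 1"
      unfolding select_mon_def by (induction rule: infinite_finite_induct)
        (auto simp: var_eq_single_vmon mult_single)
    moreover have "(\<Prod>i\<in>UNIV. var (i, c i)) \<in> G_set" unfolding G_set_def P_set_def by blast
    ultimately show ?thesis
      using select lm_single_plus_lower[OF tdo, where h = 0] by fastforce
  qed
qed

lemma inj_square_mon: "inj square_mon"
proof (rule injI)
  fix v w :: "'n \<times> xyz"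
  assume "square_mon v = square_mon w"
  then have "Poly_Mapping.lookup (square_mon v) v = Poly_Mapping.lookup (square_mon w) v" by simp
  then show "v = w" by (simp add: lookup_square_mon split: if_splits)
qed

lemma inj_cross_mon: "inj cross_mon"
proof (rule injI)
  fix v w :: "'n \<times> xyz"
  assume eq: "cross_mon v = cross_mon w"
  obtain i t j s where v: "v = (i, t)" and w: "w = (j, s)" by fastforce
  obtain t' where "t' \<noteq> t" by (metis xyz.distinct(1) xyz.distinct(3))
  then have "j = i" using arg_cong[OF eq, of "\<lambda>m. Poly_Mapping.lookup m (i, t')"]
    by (simp add: v w lookup_cross_mon split: if_splits)
  moreover have "s = t" using arg_cong[OF eq, of "\<lambda>m. Poly_Mapping.lookup m (i, t)"] \<open>j = i\<close>
    by (simp add: v w lookup_cross_mon split: if_splits)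
  ultimately show "v = w" by (simp add: v w)
qed

lemma inj_select_mon: "inj select_mon"
proof (rule injI)
  fix c d :: "'n::finite \<Rightarrow> xyz"
  assume eq: "select_mon c = select_mon d"
  show "c = d"
  proof
    fix i
    show "c i = d i" using arg_cong[OF eq, of "\<lambda>m. Poly_Mapping.lookup m (i, c i)"]
      by (simp add: lookup_select_mon split: if_splits)
  qed
qed

lemma card_G_leads:
  assumes n: "CARD('n::finite) > 1"
  shows "card (G_leads :: 'n mon set) = 6 * CARD('n) + 3 ^ CARD('n)"
proof -
  have card_xyz: "CARD(xyz) = 3" by (simp add: UNIV_xyz)
  have square_disj: "square_mon v \<noteq> cross_mon w \<and> square_mon v \<noteq> select_mon c"
    for v w :: "'n \<times> xyz" and c
  proof -
    obtain i t where v: "v = (i, t)" by fastforce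
    obtain j s where w: "w = (j, s)" by fastforce
    have "Poly_Mapping.lookup (square_mon v) v = 2" by (simp add: lookup_square_mon)
    moreover have "Poly_Mapping.lookup (cross_mon w) v \<le> 1"
      "Poly_Mapping.lookup (select_mon c) v \<le> 1"
      by (simp_all add: v w lookup_cross_mon lookup_select_mon)
    ultimately show ?thesis by auto
  qed
  have cross_select_disj: "cross_mon w \<noteq> select_mon c" for w :: "'n \<times> xyz" and c
  proof
    obtain i t where w: "w = (i, t)" by fastforce
    obtain j where "j \<noteq> i" using ex_other_index[OF n] .
    assume "cross_mon w = select_mon c"
    then have "block_deg (cross_mon (i, t)) j = block_deg (select_mon c) j" by (simp add: w)
    with \<open>j \<noteq> i\<close> show False by (simp add: block_deg_cross_mon block_deg_select_mon)
  qed
  have "card (range (square_mon :: _ \<Rightarrow> 'n mon) \<union> range cross_mon) = 3 * CARD('n) + 3 * CARD('n)"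
    by (subst card_Un_disjoint)
      (use square_disj in \<open>auto simp: card_image inj_square_mon inj_cross_mon card_xyz\<close>)
  moreover have "card (range (select_mon :: _ \<Rightarrow> 'n mon)) = 3 ^ CARD('n)"
    by (simp add: card_image inj_select_mon card_xyz card_fun)
  moreover have "card (G_leads :: 'n mon set)
      = card (range (square_mon :: _ \<Rightarrow> 'n mon) \<union> range cross_mon)
        + card (range (select_mon :: _ \<Rightarrow> 'n mon))"
    unfolding G_leads_def by (rule card_Un_disjoint)
      (use square_disj cross_select_disj in \<open>auto dest: sym\<close>)
  ultimately show ?thesis by simp
qed

lemma G_leads_subset_lm_groebner_basis:
  fixes G :: "'n::finite pol set"
  assumes n: "CARD('n) > 1" and tdo: "total_degree_order le"
    and gb: "is_groebner_basis le (ideal_gen G_set) G"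
  shows "G_leads \<subseteq> lm le ` G"
proof
  fix m :: "'n mon"
  assume "m \<in> G_leads"
  then obtain f where "f \<in> G_set" "f \<noteq> 0" "lm le f = m"
    using G_leads_are_lm_G_set[OF tdo] by blast
  then obtain g where "g \<in> G" "g \<noteq> 0" "mdvd (lm le g) m"
    using gb in_ideal_gen[of f G_set] unfolding is_groebner_basis_def by blast
  have "lm le g = m"
  proof (rule ccontr)
    assume "lm le g \<noteq> m"
    with \<open>m \<in> G_leads\<close> \<open>mdvd (lm le g) m\<close> have "sparse_mon (lm le g)"
      by (intro proper_divisor_G_leads_sparse[OF n])
    moreover have "g \<in> ideal_gen G_set" using gb \<open>g \<in> G\<close> by (auto simp: is_groebner_basis_def)
    ultimately show False using not_sparse_lm_ideal[OF tdo _ \<open>g \<noteq> 0\<close>] by blast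
  qed
  with \<open>g \<in> G\<close> show "m \<in> lm le ` G" by blast
qed

theorem lemma3:
  fixes le :: "'n::finite mon \<Rightarrow> 'n mon \<Rightarrow> bool"
    and G :: "'n pol set"
  assumes "CARD('n) > 1"
    and "total_degree_order le"
    and "is_groebner_basis le (ideal_gen G_set) G"
  shows "card G \<ge> 6 * CARD('n) + 3 ^ CARD('n)"
proof -
  have "finite G" using assms(3) by (simp add: is_groebner_basis_def)
  have "card (G_leads :: 'n mon set) \<le> card (lm le ` G)"
    using G_leads_subset_lm_groebner_basis[OF assms] \<open>finite G\<close> by (intro card_mono) auto
  also have "\<dots> \<le> card G"
    using \<open>finite G\<close> by (rule card_image_le)
  finally show ?thesis using card_G_leads[OF assms(1)] by simp
qed

end
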